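(* Let $P_1,P_2,N>0$ and let $\rho_1\in[0,1)$ satisfy $\frac{P_2}{N}\ge\frac{\rho_1^2}{1-\rho_1^2}$. Define $R_1(\rho_1)=\frac12\log\big(1+\frac{P_1(1-\rho_1^2)}{N}\big)$ and $$R_2(\rho_1)=\max_{\rho_2\in[0,1]}\min\Big\{\tfrac12\log\Big(1+\tfrac{P_2(1-\rho_2^2)}{N}\Big),\ \tfrac12\log\Big(\tfrac{P_1+P_2+2\sqrt{P_1P_2}\rho_1\rho_2+N}{P_1(1-\rho_1^2)+N}\Big)\Big\}.$$ Then for every $\epsilon>0$, $(R_1(\rho_1),R_2(\rho_1)+\epsilon)\notin\mathcal R_{\mathrm{CL}}(P_1,P_2,N)$.
   Context: Cover–Leung region: $\mathcal R_{\mathrm{CL}}(P_1,P_2,N)=\bigcup_{\rho_1,\rho_2\in[0,1]}\mathcal R_{\mathrm{CL}}^{(\rho_1,\rho_2)}(P_1,P_2,N)$, where $\mathcal R_{\mathrm{CL}}^{(\rho_1,\rho_2)}(P_1,P_2,N)$ is the set of nonnegative $(R_1,R_2)$ with $R_1\le\frac12\log(1+\frac{P_1(1-\rho_1^2)}{N})$, $R_2\le\frac12\log(1+\frac{P_2(1-\rho_2^2)}{N})$, $R_1+R_2\le\frac12\log(1+\frac{P_1+P_2+2\sqrt{P_1P_2}\rho_1\rho_2}{N})$. *)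

theory Defs
  imports "HOL-Analysis.Analysis"
begin

text \<open>Logarithms are taken base 2 (the choice of base does not affect the statement).\<close>

definition CL_region_rho :: "real \<Rightarrow> real \<Rightarrow> real \<Rightarrow> real \<Rightarrow> real \<Rightarrow> (real \<times> real) set" where
  "CL_region_rho P1 P2 N \<rho>1 \<rho>2 = {(R1, R2). 0 \<le> R1 \<and> 0 \<le> R2 \<and>
      R1 \<le> 1/2 * log 2 (1 + P1 * (1 - \<rho>1^2) / N) \<and>
      R2 \<le> 1/2 * log 2 (1 + P2 * (1 - \<rho>2^2) / N) \<and>
      R1 + R2 \<le> 1/2 * log 2 (1 + (P1 + P2 + 2 * sqrt (P1 * P2) * \<rho>1 * \<rho>2) / N)}"

definition CL_region :: "real \<Rightarrow> real \<Rightarrow> real \<Rightarrow> (real \<times> real) set" where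
  "CL_region P1 P2 N = (\<Union>\<rho>1\<in>{0..1}. \<Union>\<rho>2\<in>{0..1}. CL_region_rho P1 P2 N \<rho>1 \<rho>2)"

definition R1_fun :: "real \<Rightarrow> real \<Rightarrow> real \<Rightarrow> real" where
  "R1_fun P1 N \<rho>1 = 1/2 * log 2 (1 + P1 * (1 - \<rho>1^2) / N)"

definition R2_fun :: "real \<Rightarrow> real \<Rightarrow> real \<Rightarrow> real \<Rightarrow> real" where
  "R2_fun P1 P2 N \<rho>1 = (SUP \<rho>2\<in>{0..1::real}.
      min (1/2 * log 2 (1 + P2 * (1 - \<rho>2^2) / N))
          (1/2 * log 2 ((P1 + P2 + 2 * sqrt (P1 * P2) * \<rho>1 * \<rho>2 + N) / (P1 * (1 - \<rho>1^2) + N))))"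

end

theory Submission
  imports Defs
begin

(* Suppose the point lies in the region for some correlation pair (a, b) in [0,1]^2.
   (1) The individual bound on R1 forces the log argument for a to dominate the one for rho1,
       i.e. 1 - a^2 >= 1 - rho1^2, hence a <= rho1.
   (2) Since a <= rho1, the sum-rate bound at (a, b) is at most the sum-rate bound at (rho1, b);
       subtracting R1(rho1) turns it into the second term of the objective defining R2(rho1),
       taken at rho2 = b.
   (3) Together with the individual R2 bound at b, R2(rho1) + eps <= objective(b) <= R2(rho1),
       because the objective is bounded on [0,1] and R2(rho1) is its supremum. *)

definition R2_objective :: "real \<Rightarrow> real \<Rightarrow> real \<Rightarrow> real \<Rightarrow> real \<Rightarrow> real" where
  "R2_objective P1 P2 N \<rho>1 \<rho>2 = min (1/2 * log 2 (1 + P2 * (1 - \<rho>2^2) / N))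
     (1/2 * log 2 ((P1 + P2 + 2 * sqrt (P1 * P2) * \<rho>1 * \<rho>2 + N) / (P1 * (1 - \<rho>1^2) + N)))"

lemma R2_fun_eq_SUP: "R2_fun P1 P2 N \<rho>1 = (SUP \<rho>2\<in>{0..1}. R2_objective P1 P2 N \<rho>1 \<rho>2)"
  unfolding R2_fun_def R2_objective_def ..

text \<open>The objective is bounded above on \<open>[0,1]\<close> by the single-user capacity of user 2,
  which makes the supremum in \<open>R2_fun\<close> a genuine least upper bound.\<close>
lemma R2_objective_bounded:
  assumes "P2 > 0" "N > 0" "\<rho>2 \<in> {0..1}"
  shows "R2_objective P1 P2 N \<rho>1 \<rho>2 \<le> 1/2 * log 2 (1 + P2 / N)"
proof -
  have "0 < 1 + P2 * (1 - \<rho>2^2) / N"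
    using assms by (simp add: add_pos_nonneg power_le_one)
  moreover have "1 + P2 * (1 - \<rho>2^2) / N \<le> 1 + P2 / N"
    using assms by (simp add: divide_right_mono mult_left_le)
  ultimately have "log 2 (1 + P2 * (1 - \<rho>2^2) / N) \<le> log 2 (1 + P2 / N)" by simp
  then show ?thesis unfolding R2_objective_def by simp
qed

lemma R2_objective_le_R2_fun:
  assumes "P2 > 0" "N > 0" "\<rho>2 \<in> {0..1}"
  shows "R2_objective P1 P2 N \<rho>1 \<rho>2 \<le> R2_fun P1 P2 N \<rho>1"
proof -
  have "bdd_above (R2_objective P1 P2 N \<rho>1 ` {0..1})"
    using R2_objective_bounded[OF assms(1,2)] by (intro bdd_aboveI2)
  then show ?thesis unfolding R2_fun_eq_SUP using assms(3) by (rule cSUP_upper2) simp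
qed

lemma individual_rate_mono_rho:
  assumes "P > 0" "N > 0" "0 \<le> a" "a \<le> 1" "0 \<le> \<rho>" "\<rho> \<le> 1"
    and "1/2 * log 2 (1 + P * (1 - \<rho>^2) / N) \<le> 1/2 * log 2 (1 + P * (1 - a^2) / N)"
  shows "a \<le> \<rho>"
proof -
  have pos_a: "0 < 1 + P * (1 - a^2) / N" and pos_\<rho>: "0 < 1 + P * (1 - \<rho>^2) / N"
    using assms by (simp_all add: add_pos_nonneg power_le_one)
  have "1 + P * (1 - \<rho>^2) / N \<le> 1 + P * (1 - a^2) / N"
    using assms(7) pos_a pos_\<rho> by simp
  then have "P * (1 - \<rho>^2) \<le> P * (1 - a^2)"
    using assms(2) by (simp add: divide_le_cancel)
  then have "a^2 \<le> \<rho>^2" using assms(1) by simp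
  then show ?thesis using assms(3,5) by (simp add: power_mono_iff)
qed

lemma log_rate_difference:
  assumes "N > 0" "X + N > 0" "Y + N > 0"
  shows "log 2 (1 + X / N) - log 2 (1 + Y / N) = log 2 ((X + N) / (Y + N))"
proof -
  have "1 + X / N = (X + N) / N" "1 + Y / N = (Y + N) / N"
    using assms(1) by (simp_all add: field_simps)
  then show ?thesis using assms by (simp add: log_divide_pos)
qed

lemma sum_rate_bound_for_R2:
  assumes "P1 > 0" "P2 > 0" "N > 0" "0 \<le> a" "a \<le> \<rho>1" "\<rho>1 \<le> 1" "0 \<le> b"
    and sum: "1/2 * log 2 (1 + P1 * (1 - \<rho>1^2) / N) + R
              \<le> 1/2 * log 2 (1 + (P1 + P2 + 2 * sqrt (P1 * P2) * a * b) / N)"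
  shows "R \<le> 1/2 * log 2 ((P1 + P2 + 2 * sqrt (P1 * P2) * \<rho>1 * b + N) / (P1 * (1 - \<rho>1^2) + N))"
proof -
  define s where "s = sqrt (P1 * P2)"
  have "s \<ge> 0" unfolding s_def using assms by simp
  then have s_ab: "0 \<le> s * a * b" and s_le: "s * a * b \<le> s * \<rho>1 * b"
    using assms(4,5,7) by (simp_all add: mult_right_mono mult_left_mono)
  have pos_sum: "0 < P1 + P2 + 2 * s * a * b + N"
    using s_ab assms by simp
  have "\<rho>1^2 \<le> 1" using assms(4,5,6) by (simp add: power_le_one)
  then have "0 \<le> P1 * (1 - \<rho>1^2)" using assms(1) by simp
  then have pos_R1: "0 < P1 * (1 - \<rho>1^2) + N"
    using assms(1,3) by (simp add: add_pos_nonneg)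
  have "log 2 (1 + (P1 + P2 + 2 * s * a * b) / N) \<le> log 2 (1 + (P1 + P2 + 2 * s * \<rho>1 * b) / N)"
    using s_le pos_sum assms(3) by (simp add: divide_right_mono add_pos_nonneg field_simps)
  with sum have "R \<le> 1/2 * (log 2 (1 + (P1 + P2 + 2 * s * \<rho>1 * b) / N)
                               - log 2 (1 + P1 * (1 - \<rho>1^2) / N))"
    unfolding s_def by simp
  also have "\<dots> = 1/2 * log 2 ((P1 + P2 + 2 * s * \<rho>1 * b + N) / (P1 * (1 - \<rho>1^2) + N))"
    using log_rate_difference[OF assms(3) _ pos_R1] pos_sum s_le by simp
  finally show ?thesis unfolding s_def .
qed

theorem mainTheorem12:
  fixes P1 P2 N \<rho>1 \<epsilon> :: real
  assumes "P1 > 0" "P2 > 0" "N > 0"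
    and "0 \<le> \<rho>1" "\<rho>1 < 1"
    and "P2 / N \<ge> \<rho>1^2 / (1 - \<rho>1^2)"
    and "\<epsilon> > 0"
  shows "(R1_fun P1 N \<rho>1, R2_fun P1 P2 N \<rho>1 + \<epsilon>) \<notin> CL_region P1 P2 N"
proof
  let ?R2 = "R2_fun P1 P2 N \<rho>1 + \<epsilon>"
  assume "(R1_fun P1 N \<rho>1, ?R2) \<in> CL_region P1 P2 N"
  then obtain a b where ab: "a \<in> {0..1}" "b \<in> {0..1}"
    and "(R1_fun P1 N \<rho>1, ?R2) \<in> CL_region_rho P1 P2 N a b"
    unfolding CL_region_def by blast
  then have R1_bound: "1/2 * log 2 (1 + P1 * (1 - \<rho>1^2) / N) \<le> 1/2 * log 2 (1 + P1 * (1 - a^2) / N)"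
    and R2_bound: "?R2 \<le> 1/2 * log 2 (1 + P2 * (1 - b^2) / N)"
    and sum_bound: "1/2 * log 2 (1 + P1 * (1 - \<rho>1^2) / N) + ?R2
                    \<le> 1/2 * log 2 (1 + (P1 + P2 + 2 * sqrt (P1 * P2) * a * b) / N)"
    unfolding CL_region_rho_def R1_fun_def by auto
  have "a \<le> \<rho>1"
    using individual_rate_mono_rho[OF assms(1,3) _ _ assms(4) _ R1_bound] ab assms(5) by simp
  then have "?R2 \<le> R2_objective P1 P2 N \<rho>1 b"
    using sum_rate_bound_for_R2[OF assms(1-3) _ _ _ _ sum_bound] R2_bound ab assms(5)
    unfolding R2_objective_def by simp
  also have "\<dots> \<le> R2_fun P1 P2 N \<rho>1"
    using R2_objective_le_R2_fun[OF assms(2,3) ab(2)] .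
  finally show False using assms(7) by simp
qed

end
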